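(* Let $\mathcal{Y}=\{1,\dots,K\}$ and let $P,Q$ be a source and a target distribution on $\mathcal{X}\times\mathcal{Y}$ with label marginals $p(y),q(y)$, satisfying the label shift assumption $q(x\mid y)=p(x\mid y)$ for all $y$, and such that the likelihood ratios $w(y)=q(y)/p(y)$ are well defined and known for all $y\in\mathcal{Y}$. Let $\{(X_i,Y_i)\}_{i\in\mathcal{I}_1}$ be training data, and let $\widehat{\pi}:\mathcal{X}\to\Delta_K$ be a probabilistic predictor computed from the training data only. Let $(X_1,Y_1),\dots,(X_n,Y_n)$ (the calibration set $\mathcal{I}_2$) be i.i.d. from $P$, let $(X_{n+1},Y_{n+1})$ be drawn from $Q$ independently, and let $U_1,\dots,U_{n+1}$ be i.i.d. $\mathrm{Unif}([0,1])$ independent of everything else. Define, for $x\in\mathcal{X}$, $y\in\mathcal{Y}$, $u\in[0,1]$, $$\rho_y(x;\widehat{\pi})=\sum_{y'=1}^K \widehat{\pi}_{y'}(x)\,\mathbf{1}\{\widehat{\pi}_{y'}(x)>\widehat{\pi}_y(x)\},\qquad r(x,y,u;\widehat{\pi})=\rho_y(x;\widehat{\pi})+u\cdot\widehat{\pi}_y(x),$$ and $r_i=r(X_i,Y_i,U_i;\widehat{\pi})$ for $i=1,\dots,n$. For each $y\in\mathcal{Y}$ set $$\tilde p_i^w(y)=\frac{w(Y_i)}{\sum_{j=1}^n w(Y_j)+w(y)}\ (i=1,\dots,n),\qquad \tilde p_{n+1}^w(y)=\frac{w(y)}{\sum_{j=1}^n w(Y_j)+w(y)},$$ $$\tau^\star_w(y)=Q_{1-\alpha}\Big(\sum_{i=1}^n\tilde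 p_i^w(y)\,\delta_{r_i}+\tilde p_{n+1}^w(y)\,\delta_1\Big),$$ and define the prediction set $\mathcal{F}^{(w)}_{\tau^\star}(x,u;\widehat{\pi})=\{y\in\mathcal{Y}:\rho_y(x;\widehat{\pi})+u\cdot\widehat{\pi}_y(x)\le\tau^\star_w(y)\}$. Then for any $\alpha\in(0,1)$, $$\mathbb{P}\big(Y_{n+1}\in\mathcal{F}^{(w)}_{\tau^\star}(X_{n+1},U_{n+1};\widehat{\pi})\ \big|\ \{(X_i,Y_i)\}_{i\in\mathcal{I}_1}\big)\ge 1-\alpha.$$
   Context: $\Delta_K$ denotes the probability simplex in $\mathbb{R}^K$ and $\widehat{\pi}_y(x)$ is the $y$-th coordinate of $\widehat{\pi}(x)$. For a distribution $F$ on $\mathbb{R}$, $Q_\beta(F)=\inf\{z:F(z)\ge\beta\}$ denotes its $\beta$-quantile (with $F$ also denoting its CDF); $\delta_a$ is the point mass at $a$. *)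

theory Defs
  imports "HOL-Probability.Probability"
begin

text \<open>Labels are 1..K. A probabilistic predictor is pihat :: 'x => nat => real,
  with pihat x y the y-th coordinate.\<close>

definition in_simplex :: "nat \<Rightarrow> (nat \<Rightarrow> real) \<Rightarrow> bool" where
  "in_simplex K v \<longleftrightarrow> (\<forall>y\<in>{1..K}. 0 \<le> v y) \<and> (\<Sum>y=1..K. v y) = 1"

definition rho :: "nat \<Rightarrow> ('x \<Rightarrow> nat \<Rightarrow> real) \<Rightarrow> 'x \<Rightarrow> nat \<Rightarrow> real" where
  "rho K pihat x y = (\<Sum>y'=1..K. pihat x y' * (if pihat x y' > pihat x y then 1 else 0))"

definition rscore :: "nat \<Rightarrow> ('x \<Rightarrow> nat \<Rightarrow> real) \<Rightarrow> 'x \<Rightarrow> nat \<Rightarrow> real \<Rightarrow> real" where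
  "rscore K pihat x y u = rho K pihat x y + u * pihat x y"

definition quantile :: "real \<Rightarrow> (real \<Rightarrow> real) \<Rightarrow> real" where
  "quantile \<beta> F = Inf {z. F z \<ge> \<beta>}"

text \<open>CDF of  sum_i p_i^w(y) delta_{r_i} + p_{n+1}^w(y) delta_1.\<close>
definition wcdf :: "(nat \<Rightarrow> real) \<Rightarrow> nat \<Rightarrow> (nat \<Rightarrow> nat) \<Rightarrow> (nat \<Rightarrow> real) \<Rightarrow> nat \<Rightarrow> real \<Rightarrow> real" where
  "wcdf w n Ys rs y z =
     (let S = (\<Sum>j=1..n. w (Ys j)) + w y in
      (\<Sum>i=1..n. (w (Ys i) / S) * (if rs i \<le> z then 1 else 0))
      + (w y / S) * (if (1::real) \<le> z then 1 else 0))"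

definition tau_star :: "(nat \<Rightarrow> real) \<Rightarrow> nat \<Rightarrow> (nat \<Rightarrow> nat) \<Rightarrow> (nat \<Rightarrow> real) \<Rightarrow> real \<Rightarrow> nat \<Rightarrow> real" where
  "tau_star w n Ys rs \<alpha> y = quantile (1 - \<alpha>) (wcdf w n Ys rs y)"

definition pred_set :: "nat \<Rightarrow> ('x \<Rightarrow> nat \<Rightarrow> real) \<Rightarrow> (nat \<Rightarrow> real) \<Rightarrow> 'x \<Rightarrow> real \<Rightarrow> nat set" where
  "pred_set K pihat tau x u = {y \<in> {1..K}. rscore K pihat x y u \<le> tau y}"

end

theory Submission
  imports Defs
begin

text \<open>Under label shift, Q has density w(y) with respect to P, so the joint law of the calibration
  points and the test point is the product P^(n+1) tilted by w(Y_(n+1)). Swapping the test point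
  with the k-th point leaves P^(n+1) invariant, hence the coverage probability also equals the
  P^(n+1)-expectation of w(Y_k) times the indicator that point k, treated as the test point, is
  covered. Averaging over k reduces the claim to a deterministic inequality for every fixed
  sample: moving one score up to the maximal score 1 can only raise the weighted quantile, so every
  point whose score lies below the quantile c of the unmodified scores is covered, and by the
  choice of c these points carry at least the fraction 1 - \<alpha> of the total weight.\<close>

section \<open>Quantiles of weighted point masses\<close>

definition weighted_cdf :: "'i set \<Rightarrow> ('i \<Rightarrow> real) \<Rightarrow> ('i \<Rightarrow> real) \<Rightarrow> real \<Rightarrow> real" where
  "weighted_cdf A a r z = (\<Sum>i\<in>A. a i * (if r i \<le> z then 1 else 0))"

lemma weighted_cdf_cong:
  "(\<And>i. i \<in> A \<Longrightarrow> a i = a' i) \<Longrightarrow> (\<And>i. i \<in> A \<Longrightarrow> r i = r' i)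
    \<Longrightarrow> weighted_cdf A a r = weighted_cdf A a' r'"
  unfolding weighted_cdf_def by (auto intro!: sum.cong)

lemma weighted_cdf_reindex:
  "bij_betw \<sigma> A A \<Longrightarrow> weighted_cdf A (\<lambda>j. a (\<sigma> j)) (\<lambda>j. r (\<sigma> j)) = weighted_cdf A a r"
  unfolding weighted_cdf_def fun_eq_iff by (auto intro: sum.reindex_bij_betw)

lemma weighted_cdf_antimono_scores:
  assumes "\<forall>i\<in>A. 0 \<le> a i" and "\<forall>i\<in>A. r i \<le> r' i"
  shows "weighted_cdf A a r' z \<le> weighted_cdf A a r z"
  unfolding weighted_cdf_def using assms by (intro sum_mono) auto

lemma weighted_cdf_at_max_score_below:
  assumes "finite A" and "\<exists>i\<in>A. r i \<le> z"
  defines "c \<equiv> Max (r ` {i\<in>A. r i \<le> z})"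
  shows "c \<in> r ` A" and "c \<le> z" and "weighted_cdf A a r c = weighted_cdf A a r z"
proof -
  have "c \<in> r ` {i\<in>A. r i \<le> z}" using assms unfolding c_def by (intro Max_in) auto
  then show "c \<in> r ` A" and "c \<le> z" by auto
  have "\<forall>i\<in>A. r i \<le> c \<longleftrightarrow> r i \<le> z"
    using \<open>c \<le> z\<close> assms(1) unfolding c_def by (auto intro: Max_ge)
  then show "weighted_cdf A a r c = weighted_cdf A a r z"
    unfolding weighted_cdf_def by (auto intro!: sum.cong)
qed

lemma quantile_weighted_cdf:
  fixes A :: "'i set" and a r :: "'i \<Rightarrow> real"
  defines "F \<equiv> weighted_cdf A a r"
  assumes A: "finite A" and a: "\<forall>i\<in>A. 0 \<le> a i" "(\<Sum>i\<in>A. a i) = 1"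
    and \<beta>: "0 < \<beta>" "\<beta> \<le> 1"
  shows "quantile \<beta> F \<in> r ` A" and "\<beta> \<le> F (quantile \<beta> F)"
    and "\<And>z. \<beta> \<le> F z \<Longrightarrow> quantile \<beta> F \<le> z"
proof -
  define C where "C = {c \<in> r ` A. \<beta> \<le> F c}"
  have "A \<noteq> {}" using a by auto
  then have "Max (r ` A) \<in> C"
    using A a \<beta> unfolding C_def F_def weighted_cdf_def by (auto intro!: sum.cong)
  then have "C \<noteq> {}" by auto
  have "finite C" using A unfolding C_def by auto
  have C_below: "\<exists>c\<in>C. c \<le> z" if "\<beta> \<le> F z" for z
  proof -
    have "\<exists>i\<in>A. r i \<le> z"
    proof (rule ccontr)
      assume "\<not> (\<exists>i\<in>A. r i \<le> z)"
      then have "F z = 0" unfolding F_def weighted_cdf_def by (auto intro!: sum.neutral)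
      then show False using that \<beta> by simp
    qed
    \<comment> \<open>F is a step function: its value at z is already attained at the largest score below z\<close>
    then have "Max (r ` {i\<in>A. r i \<le> z}) \<in> C \<and> Max (r ` {i\<in>A. r i \<le> z}) \<le> z"
      using weighted_cdf_at_max_score_below[OF A] that unfolding C_def F_def by simp
    then show ?thesis by blast
  qed
  have "quantile \<beta> F = Min C"
    unfolding quantile_def
  proof (rule cInf_eq_minimum)
    show "Min C \<in> {z. \<beta> \<le> F z}" using Min_in[OF \<open>finite C\<close> \<open>C \<noteq> {}\<close>] C_def by auto
    show "Min C \<le> z" if "z \<in> {z. \<beta> \<le> F z}" for z
      using C_below[of z] that \<open>finite C\<close> by (auto intro: order_trans[OF Min_le])
  qed
  then show "quantile \<beta> F \<in> r ` A" "\<beta> \<le> F (quantile \<beta> F)"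
    and "\<And>z. \<beta> \<le> F z \<Longrightarrow> quantile \<beta> F \<le> z"
    using Min_in[OF \<open>finite C\<close> \<open>C \<noteq> {}\<close>] C_below \<open>finite C\<close> unfolding C_def
    by (auto intro: order_trans[OF Min_le])
qed

lemma le_quantile_weighted_cdf_iff:
  assumes "finite A" and "\<forall>i\<in>A. 0 \<le> a i" "(\<Sum>i\<in>A. a i) = 1" and "0 < \<beta>" "\<beta> \<le> 1"
  shows "x \<le> quantile \<beta> (weighted_cdf A a r) \<longleftrightarrow>
    (\<forall>i\<in>A. \<beta> \<le> weighted_cdf A a r (r i) \<longrightarrow> x \<le> r i)"
  using quantile_weighted_cdf[OF assms, of r] by (auto intro: order_trans)

lemma quantile_weighted_cdf_mono_scores:
  assumes "finite A" and a: "\<forall>i\<in>A. 0 \<le> a i" "(\<Sum>i\<in>A. a i) = 1" and "0 < \<beta>" "\<beta> \<le> 1"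
    and "\<forall>i\<in>A. r i \<le> r' i"
  shows "quantile \<beta> (weighted_cdf A a r) \<le> quantile \<beta> (weighted_cdf A a r')"
proof (rule quantile_weighted_cdf(3)[OF assms(1-5)])
  show "\<beta> \<le> weighted_cdf A a r (quantile \<beta> (weighted_cdf A a r'))"
    using quantile_weighted_cdf(2)[OF assms(1-5), of r']
      weighted_cdf_antimono_scores[OF a(1) assms(6)]
    by (rule order_trans)
qed

lemma weighted_coverage_replace_by_one:
  assumes A: "finite A" and a: "\<forall>i\<in>A. 0 \<le> a i" and r: "\<forall>i\<in>A. r i \<le> 1"
    and \<beta>: "0 < \<beta>" "\<beta> \<le> 1"
  shows "\<beta> * (\<Sum>i\<in>A. a i) \<le> (\<Sum>k\<in>A. a k *
    (if r k \<le> quantile \<beta> (weighted_cdf A (\<lambda>j. a j / (\<Sum>i\<in>A. a i)) (r(k := 1))) then 1 else 0))"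
proof (cases "(\<Sum>i\<in>A. a i) = 0")
  case True
  then show ?thesis using a A by (simp add: sum_nonneg_eq_0_iff)
next
  case False
  define W where "W = (\<Sum>i\<in>A. a i)"
  have "W > 0" using False a sum_nonneg[of A a] unfolding W_def by fastforce
  define p where "p = (\<lambda>j. a j / W)"
  have p: "\<forall>i\<in>A. 0 \<le> p i" "(\<Sum>i\<in>A. p i) = 1"
    using a \<open>W > 0\<close> unfolding p_def W_def by (auto simp: sum_divide_distrib[symmetric])
  define c where "c = quantile \<beta> (weighted_cdf A p r)"
  have c_le: "c \<le> quantile \<beta> (weighted_cdf A p (r(k := 1)))" if "k \<in> A" for k
    unfolding c_def using r that by (intro quantile_weighted_cdf_mono_scores[OF A p \<beta>]) auto
  have "\<beta> * W \<le> weighted_cdf A p r c * W"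
    using quantile_weighted_cdf(2)[OF A p \<beta>] \<open>W > 0\<close> unfolding c_def by simp
  also have "\<dots> = (\<Sum>k\<in>A. a k * (if r k \<le> c then 1 else 0))"
    unfolding weighted_cdf_def p_def using \<open>W > 0\<close> by (simp add: sum_distrib_right)
  also have "\<dots> \<le> (\<Sum>k\<in>A. a k * (if r k \<le> quantile \<beta> (weighted_cdf A p (r(k := 1))) then 1 else 0))"
    using c_le a by (intro sum_mono) (auto intro: order_trans)
  finally show ?thesis unfolding W_def p_def .
qed

section \<open>Tilted product measures\<close>

lemma borel_measurable_PiM_component_any:
  assumes "f \<in> borel_measurable N"
  shows "(\<lambda>v. f (v i)) \<in> borel_measurable (PiM I (\<lambda>_. N))"
proof (cases "i \<in> I")
  case True
  show ?thesis
    by (rule measurable_compose[OF measurable_component_singleton[OF True] assms])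
next
  case False
  have "(\<lambda>v. f (v i)) \<in> borel_measurable (PiM I (\<lambda>_. N))
    \<longleftrightarrow> (\<lambda>v. f undefined) \<in> borel_measurable (PiM I (\<lambda>_. N))"
  proof (rule measurable_cong)
    fix v assume "v \<in> space (PiM I (\<lambda>_. N))"
    then have "v i = undefined" using False unfolding space_PiM by (rule PiE_arb)
    then show "f (v i) = f undefined" by simp
  qed
  then show ?thesis by simp
qed

lemma fst_component_in_space_PiM:
  assumes "v \<in> space (PiM I (\<lambda>_. (MX \<Otimes>\<^sub>M count_space Y) \<Otimes>\<^sub>M N))" and "i \<in> I"
  shows "fst (v i) \<in> space MX \<times> Y"
proof -
  have "v i \<in> (space MX \<times> Y) \<times> space N"
    using assms by (auto simp: space_PiM space_pair_measure PiE_iff)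
  then show ?thesis by auto
qed

lemma emeasure_PiM_tilted:
  fixes PU :: "'s measure" and f :: "'s \<Rightarrow> ennreal" and I :: "'i set"
  assumes PU: "prob_space PU" and f: "f \<in> borel_measurable PU" and Qf: "prob_space (density PU f)"
    and I: "finite I" "m \<in> I" and G: "G \<in> sets (PiM I (\<lambda>_. PU))"
  shows "emeasure (PiM I (\<lambda>i. if i = m then density PU f else PU)) G
    = (\<integral>\<^sup>+ v. f (v m) * indicator G v \<partial>PiM I (\<lambda>_. PU))"
proof -
  define Mi where "Mi = (\<lambda>i. if i = m then density PU f else PU)"
  define J where "J = I - {m}"
  have IJ: "I = insert m J" "m \<notin> J" "finite J" using I unfolding J_def by auto
  interpret Mi: product_sigma_finite Mi
    unfolding product_sigma_finite_def Mi_def using PU Qf by (simp add: prob_space_imp_sigma_finite)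
  interpret PU: product_sigma_finite "\<lambda>_. PU"
    unfolding product_sigma_finite_def using PU by (simp add: prob_space_imp_sigma_finite)
  have "sets (PiM I Mi) = sets (PiM I (\<lambda>_. PU))"
    by (rule sets_PiM_cong) (simp_all add: Mi_def)
  then have G_Mi: "G \<in> sets (PiM (insert m J) Mi)" and G_PU: "G \<in> sets (PiM (insert m J) (\<lambda>_. PU))"
    using G IJ by simp_all
  have PiM_J: "PiM J Mi = PiM J (\<lambda>_. PU)"
    by (rule PiM_cong) (use IJ in \<open>auto simp: Mi_def\<close>)
  have "emeasure (PiM I Mi) G = (\<integral>\<^sup>+ v. indicator G v \<partial>PiM (insert m J) Mi)"
    using G_Mi IJ by simp
  also have "\<dots> = (\<integral>\<^sup>+ x. (\<integral>\<^sup>+ y. indicator G (x(m := y)) \<partial>Mi m) \<partial>PiM J Mi)"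
    using G_Mi IJ by (intro Mi.product_nn_integral_insert) simp_all
  also have "\<dots> = (\<integral>\<^sup>+ x. (\<integral>\<^sup>+ y. f y * indicator G (x(m := y)) \<partial>PU) \<partial>PiM J (\<lambda>_. PU))"
    unfolding PiM_J
  proof (rule nn_integral_cong)
    fix x assume "x \<in> space (PiM J (\<lambda>_. PU))"
    then have "(\<lambda>y. x(m := y)) \<in> measurable PU (PiM (insert m J) (\<lambda>_. PU))"
      using measurable_component_update IJ by fastforce
    then have "(\<lambda>y. indicator G (x(m := y)) :: ennreal) \<in> borel_measurable PU"
      using G_PU by measurable
    then show "(\<integral>\<^sup>+ y. indicator G (x(m := y)) \<partial>Mi m) = (\<integral>\<^sup>+ y. f y * indicator G (x(m := y)) \<partial>PU)"
      unfolding Mi_def by (simp add: nn_integral_density f)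
  qed
  also have "\<dots> = (\<integral>\<^sup>+ v. f (v m) * indicator G v \<partial>PiM (insert m J) (\<lambda>_. PU))"
  proof -
    have "(\<lambda>v. f (v m) * indicator G v) \<in> borel_measurable (PiM (insert m J) (\<lambda>_. PU))"
      using G_PU f by measurable
    from PU.product_nn_integral_insert[OF IJ(3,2) this] show ?thesis by simp
  qed
  finally show ?thesis unfolding Mi_def IJ(1) .
qed

lemma nn_integral_PiM_component:
  assumes "prob_space N" and "k \<in> I" and "f \<in> borel_measurable N"
  shows "(\<integral>\<^sup>+ v. f (v k) \<partial>PiM I (\<lambda>_. N)) = (\<integral>\<^sup>+ s. f s \<partial>N)"
proof -
  have "(\<integral>\<^sup>+ v. f (v k) \<partial>PiM I (\<lambda>_. N)) = (\<integral>\<^sup>+ s. f s \<partial>distr (PiM I (\<lambda>_. N)) N (\<lambda>v. v k))"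
    using assms by (subst nn_integral_distr) simp_all
  also have "distr (PiM I (\<lambda>_. N)) N (\<lambda>v. v k) = N"
    using assms by (intro distr_PiM_component)
  finally show ?thesis .
qed

lemma measurable_PiM_transpose:
  assumes "k \<in> I" "m \<in> I"
  shows "(\<lambda>v. \<lambda>i\<in>I. v (Transposition.transpose k m i)) \<in> measurable (PiM I (\<lambda>_. N)) (PiM I (\<lambda>_. N))"
  using assms
    by (intro measurable_restrict measurable_component_singleton)
      (auto simp: Transposition.transpose_def)

lemma nn_integral_PiM_transpose:
  fixes PU :: "'s measure" and I :: "'i set"
  assumes PU: "prob_space PU" and "k \<in> I" "m \<in> I"
    and g: "g \<in> borel_measurable (PiM I (\<lambda>_. PU))"
  shows "(\<integral>\<^sup>+ v. g v \<partial>PiM I (\<lambda>_. PU))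
    = (\<integral>\<^sup>+ v. g (\<lambda>i\<in>I. v (Transposition.transpose k m i)) \<partial>PiM I (\<lambda>_. PU))"
proof -
  let ?\<tau> = "Transposition.transpose k m" and ?D = "PiM I (\<lambda>_. PU)"
  have \<tau>: "bij_betw ?\<tau> I I" using assms by (simp add: bij_betw_transpose_iff)
  have "distr ?D ?D (\<lambda>v. \<lambda>i\<in>I. v (?\<tau> i)) = ?D"
    using distr_PiM_reindex[of I "\<lambda>_. PU" ?\<tau> I] PU bij_betw_imp_inj_on[OF \<tau>]
      bij_betw_imp_funcset[OF \<tau>] by simp
  then show ?thesis
    using nn_integral_distr[OF measurable_PiM_transpose[OF assms(2,3), where N=PU], of g] g by simp
qed

text \<open>Since swapping coordinates k and m preserves the untilted product, the tilted measure gives G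
  the mass of f(v k) times the indicator of the swapped G, for every k; averaging over k yields
  the bound.\<close>
lemma emeasure_PiM_tilted_ge:
  fixes PU :: "'s measure" and f :: "'s \<Rightarrow> ennreal" and I :: "'i set"
  assumes PU: "prob_space PU" and f: "f \<in> borel_measurable PU" and Qf: "prob_space (density PU f)"
    and I: "finite I" "m \<in> I" and G: "G \<in> sets (PiM I (\<lambda>_. PU))"
    and swap_bound: "AE v in PiM I (\<lambda>_. PU). ennreal \<beta> * (\<Sum>k\<in>I. f (v k))
      \<le> (\<Sum>k\<in>I. f (v k) * indicator G (\<lambda>i\<in>I. v (Transposition.transpose k m i)))"
  shows "ennreal \<beta> \<le> emeasure (PiM I (\<lambda>i. if i = m then density PU f else PU)) G"
proof -
  let ?D = "PiM I (\<lambda>_. PU)" and ?T = "\<lambda>k v. \<lambda>i\<in>I. v (Transposition.transpose k m i)"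
  define E where "E = emeasure (PiM I (\<lambda>i. if i = m then density PU f else PU)) G"
  have f_k: "(\<lambda>v. f (v k)) \<in> borel_measurable ?D" if "k \<in> I" for k
    using f that by measurable
  have T_k: "?T k \<in> measurable ?D ?D" if "k \<in> I" for k
    using that I by (intro measurable_PiM_transpose)
  have E_k: "E = (\<integral>\<^sup>+ v. f (v k) * indicator G (?T k v) \<partial>?D)" if "k \<in> I" for k
  proof -
    have "E = (\<integral>\<^sup>+ v. f (v m) * indicator G v \<partial>?D)"
      unfolding E_def by (rule emeasure_PiM_tilted[OF PU f Qf I G])
    also have "\<dots> = (\<integral>\<^sup>+ v. f (?T k v m) * indicator G (?T k v) \<partial>?D)"
      by (intro nn_integral_PiM_transpose[OF PU that I(2)] borel_measurable_times_ennreal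
          f_k[OF I(2)] borel_measurable_indicator G)
    finally show ?thesis using I by simp
  qed
  have f_integral: "(\<integral>\<^sup>+ v. f (v k) \<partial>?D) = 1" if "k \<in> I" for k
    using nn_integral_PiM_component[OF PU that f] prob_space.emeasure_space_1[OF Qf] f
    by (simp add: emeasure_density)
  have "of_nat (card I) * ennreal \<beta> = ennreal \<beta> * (\<Sum>k\<in>I. \<integral>\<^sup>+ v. f (v k) \<partial>?D)"
    using f_integral by (simp add: mult.commute)
  also have "\<dots> = (\<integral>\<^sup>+ v. ennreal \<beta> * (\<Sum>k\<in>I. f (v k)) \<partial>?D)"
    using f_k by (simp add: nn_integral_cmult nn_integral_sum borel_measurable_sum)
  also have "\<dots> \<le> (\<integral>\<^sup>+ v. (\<Sum>k\<in>I. f (v k) * indicator G (?T k v)) \<partial>?D)"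
    by (rule nn_integral_mono_AE[OF swap_bound])
  also have "\<dots> = (\<Sum>k\<in>I. \<integral>\<^sup>+ v. f (v k) * indicator G (?T k v) \<partial>?D)"
    using f_k by (intro nn_integral_sum borel_measurable_times_ennreal
        measurable_compose[OF T_k borel_measurable_indicator[OF G]])
  also have "\<dots> = (\<Sum>k\<in>I. E)"
    using E_k by simp
  also have "\<dots> = of_nat (card I) * E"
    by simp
  finally have "of_nat (card I) * ennreal \<beta> \<le> of_nat (card I) * E" .
  then show ?thesis
    unfolding E_def using I by (subst (asm) ennreal_mult_le_mult_iff) (auto simp: card_gt_0_iff)
qed

lemma (in prob_space) distr_indep_vars_PiM:
  assumes "I \<noteq> {}" and indep: "indep_vars (\<lambda>_. S) X I"
    and distr: "\<And>i. i \<in> I \<Longrightarrow> distr M S (X i) = N i"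
  shows "distr M (PiM I (\<lambda>_. S)) (\<lambda>\<omega>. \<lambda>i\<in>I. X i \<omega>) = PiM I N"
proof -
  have "X i \<in> measurable M S" if "i \<in> I" for i
    using indep that unfolding indep_vars_def2 by auto
  then have "distr M (PiM I (\<lambda>_. S)) (\<lambda>\<omega>. \<lambda>i\<in>I. X i \<omega>) = PiM I (\<lambda>i. distr M S (X i))"
    using indep_vars_iff_distr_eq_PiM'[OF assms(1), where M'="\<lambda>_. S" and X=X] indep by auto
  also have "\<dots> = PiM I N"
    using distr by (intro PiM_cong) auto
  finally show ?thesis .
qed

section \<open>Label shift as a change of density\<close>

lemma borel_measurable_label_fun:
  assumes "sets P = sets (MX \<Otimes>\<^sub>M count_space Y)"
  shows "(\<lambda>a. f (snd a)) \<in> borel_measurable P"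
proof -
  have "(\<lambda>a. f (snd a)) \<in> borel_measurable (MX \<Otimes>\<^sub>M count_space Y)"
    by (rule measurable_compose[OF measurable_snd]) (simp add: measurable_count_space_eq1)
  then show ?thesis using measurable_cong_sets[OF assms refl] by blast
qed

lemma emeasure_label_shift:
  fixes P Q :: "('x \<times> 'y) measure" and MX :: "'x measure" and Y :: "'y set"
  assumes fP: "finite_measure P" and fQ: "finite_measure Q"
    and p_pos: "\<forall>y\<in>Y. measure P (space MX \<times> {y}) > 0"
    and w_def: "\<forall>y\<in>Y. w y = measure Q (space MX \<times> {y}) / measure P (space MX \<times> {y})"
    and label_shift: "\<forall>A\<in>sets MX. \<forall>y\<in>Y.
          measure Q (A \<times> {y}) * measure P (space MX \<times> {y})
        = measure P (A \<times> {y}) * measure Q (space MX \<times> {y})"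
    and A: "A \<in> sets MX" and y: "y \<in> Y"
  shows "emeasure Q (A \<times> {y}) = ennreal (w y) * emeasure P (A \<times> {y})"
proof -
  have "measure P (space MX \<times> {y}) > 0" using p_pos y by auto
  then have "measure Q (space MX \<times> {y}) = w y * measure P (space MX \<times> {y})"
    using w_def y by simp
  moreover have "measure Q (A \<times> {y}) * measure P (space MX \<times> {y})
      = measure P (A \<times> {y}) * measure Q (space MX \<times> {y})"
    using label_shift A y by blast
  ultimately have "measure Q (A \<times> {y}) * measure P (space MX \<times> {y})
      = (w y * measure P (A \<times> {y})) * measure P (space MX \<times> {y})"
    by (simp add: ac_simps)
  then have Q_eq: "measure Q (A \<times> {y}) = w y * measure P (A \<times> {y})"
    using \<open>measure P (space MX \<times> {y}) > 0\<close> by simp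
  have "0 \<le> w y" using w_def y by simp
  have "emeasure Q (A \<times> {y}) = ennreal (w y * measure P (A \<times> {y}))"
    using finite_measure.emeasure_eq_measure[OF fQ] Q_eq by simp
  also have "\<dots> = ennreal (w y) * emeasure P (A \<times> {y})"
    using finite_measure.emeasure_eq_measure[OF fP] \<open>0 \<le> w y\<close> by (simp add: ennreal_mult)
  finally show ?thesis .
qed

lemma label_shift_density:
  fixes P Q :: "('x \<times> 'y) measure" and MX :: "'x measure" and Y :: "'y set"
  assumes Y: "finite Y"
    and sP: "sets P = sets (MX \<Otimes>\<^sub>M count_space Y)" and sQ: "sets Q = sets (MX \<Otimes>\<^sub>M count_space Y)"
    and fP: "finite_measure P" and fQ: "finite_measure Q"
    and p_pos: "\<forall>y\<in>Y. measure P (space MX \<times> {y}) > 0"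
    and w_def: "\<forall>y\<in>Y. w y = measure Q (space MX \<times> {y}) / measure P (space MX \<times> {y})"
    and label_shift: "\<forall>A\<in>sets MX. \<forall>y\<in>Y.
          measure Q (A \<times> {y}) * measure P (space MX \<times> {y})
        = measure P (A \<times> {y}) * measure Q (space MX \<times> {y})"
  shows "Q = density P (\<lambda>a. ennreal (w (snd a)))"
proof (rule measure_eqI)
  fix B assume "B \<in> sets Q"
  then have BP: "B \<in> sets P" and BS: "B \<in> sets (MX \<Otimes>\<^sub>M count_space Y)" using sP sQ by auto
  define fiber where "fiber y = (\<lambda>x. (x, y)) -` B \<inter> space MX" for y
  have fiber_MX: "fiber y \<in> sets MX" if "y \<in> Y" for y
  proof -
    have "(\<lambda>x. (x, y)) \<in> measurable MX (MX \<Otimes>\<^sub>M count_space Y)"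
      using that by (intro measurable_Pair2') simp
    then show ?thesis unfolding fiber_def using BS by (rule measurable_sets)
  qed
  then have fiber: "fiber y \<times> {y} \<in> sets (MX \<Otimes>\<^sub>M count_space Y)" if "y \<in> Y" for y
    using that by (intro pair_measureI) auto
  have "B \<subseteq> space MX \<times> Y"
    using sets.sets_into_space[OF BS] by (simp add: space_pair_measure)
  then have B: "B = (\<Union>y\<in>Y. fiber y \<times> {y})" unfolding fiber_def by auto
  have Q_fiber: "emeasure Q (fiber y \<times> {y}) = ennreal (w y) * emeasure P (fiber y \<times> {y})"
    if "y \<in> Y" for y
    using fiber_MX[OF that] that by (rule emeasure_label_shift[OF fP fQ p_pos w_def label_shift])
  have "emeasure Q B = (\<Sum>y\<in>Y. emeasure Q (fiber y \<times> {y}))"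
    using fiber sQ Y by (subst B, intro sum_emeasure[symmetric]) (auto simp: disjoint_family_on_def)
  also have "\<dots> = (\<Sum>y\<in>Y. ennreal (w y) * emeasure P (fiber y \<times> {y}))"
    using Q_fiber by simp
  also have "\<dots> = (\<Sum>y\<in>Y. \<integral>\<^sup>+a. ennreal (w y) * indicator (fiber y \<times> {y}) a \<partial>P)"
    using fiber sP by (intro sum.cong refl nn_integral_cmult_indicator[symmetric]) auto
  also have "\<dots> = \<integral>\<^sup>+a. (\<Sum>y\<in>Y. ennreal (w y) * indicator (fiber y \<times> {y}) a) \<partial>P"
    using fiber sP by (intro nn_integral_sum[symmetric]) auto
  also have "\<dots> = \<integral>\<^sup>+a. ennreal (w (snd a)) * indicator B a \<partial>P"
  proof (rule nn_integral_cong)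
    fix a assume "a \<in> space P"
    then obtain x y where a: "a = (x, y)" "x \<in> space MX" "y \<in> Y"
      using sets_eq_imp_space_eq[OF sP] by (auto simp: space_pair_measure)
    then have "(\<Sum>y'\<in>Y. ennreal (w y') * indicator (fiber y' \<times> {y'}) a)
        = (\<Sum>y'\<in>Y. if y' = y then ennreal (w y) * indicator B a else 0)"
      unfolding fiber_def by (intro sum.cong refl) (auto simp: indicator_def)
    also have "\<dots> = ennreal (w (snd a)) * indicator B a"
      using Y a by simp
    finally show "(\<Sum>y\<in>Y. ennreal (w y) * indicator (fiber y \<times> {y}) a)
        = ennreal (w (snd a)) * indicator B a" .
  qed
  also have "\<dots> = emeasure (density P (\<lambda>a. ennreal (w (snd a)))) B"
    using borel_measurable_label_fun[OF sP] BP by (intro emeasure_density[symmetric]) auto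
  finally show "emeasure Q B = emeasure (density P (\<lambda>a. ennreal (w (snd a)))) B" .
qed (use sP sQ in simp)

lemma label_shift_pair_density:
  fixes P Q :: "('x \<times> nat) measure" and MX :: "'x measure" and U0 :: "'u measure"
  assumes "prob_space P" "prob_space Q" "sigma_finite_measure U0"
    and sP: "sets P = sets (MX \<Otimes>\<^sub>M count_space {1..K})"
    and sQ: "sets Q = sets (MX \<Otimes>\<^sub>M count_space {1..K})"
    and p_pos: "\<forall>y\<in>{1..K}. measure P (space MX \<times> {y}) > 0"
    and w_def: "\<forall>y\<in>{1..K}. w y = measure Q (space MX \<times> {y}) / measure P (space MX \<times> {y})"
    and label_shift: "\<forall>A\<in>sets MX. \<forall>y\<in>{1..K}.
          measure Q (A \<times> {y}) * measure P (space MX \<times> {y})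
        = measure P (A \<times> {y}) * measure Q (space MX \<times> {y})"
  shows "Q \<Otimes>\<^sub>M U0 = density (P \<Otimes>\<^sub>M U0) (\<lambda>s. ennreal (w (snd (fst s))))"
proof -
  have "Q = density P (\<lambda>a. ennreal (w (snd a)))"
    by (rule label_shift_density[OF _ sP sQ _ _ p_pos w_def label_shift])
      (use assms(1,2) in \<open>simp_all add: prob_space_def\<close>)
  then have "Q \<Otimes>\<^sub>M U0 = density P (\<lambda>a. ennreal (w (snd a))) \<Otimes>\<^sub>M density U0 (\<lambda>_. 1)"
    by (simp add: density_1)
  also have "\<dots> = density (P \<Otimes>\<^sub>M U0) (\<lambda>(a, u). ennreal (w (snd a)) * 1)"
    using assms borel_measurable_label_fun[OF sP]
      by (intro pair_measure_density) (auto simp: prob_space_imp_sigma_finite density_1)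
  finally show ?thesis by (simp add: case_prod_beta')
qed

section \<open>Coverage of the weighted conformal prediction set\<close>

lemma rscore_le_1:
  assumes "in_simplex K (pihat x)" and "y \<in> {1..K}" and "0 \<le> u" "u \<le> 1"
  shows "rscore K pihat x y u \<le> 1"
proof -
  let ?p = "pihat x"
  have p: "\<forall>y'\<in>{1..K}. 0 \<le> ?p y'" "(\<Sum>y'=1..K. ?p y') = 1"
    using assms(1) unfolding in_simplex_def by auto
  have "rho K pihat x y = (\<Sum>y'\<in>{1..K}-{y}. ?p y' * (if ?p y' > ?p y then 1 else 0))"
    unfolding rho_def using assms(2) by (subst sum.remove[of _ y]) auto
  also have "\<dots> \<le> (\<Sum>y'\<in>{1..K}-{y}. ?p y')"
    using p by (intro sum_mono) auto
  also have "\<dots> = 1 - ?p y" using p assms(2) by (subst (asm) sum.remove[of _ y]) auto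
  finally have "rho K pihat x y \<le> 1 - ?p y" .
  moreover have "u * ?p y \<le> ?p y" using assms p by (simp add: mult_left_le_one_le)
  ultimately show ?thesis unfolding rscore_def by simp
qed

lemma borel_measurable_rscore:
  assumes "\<forall>y\<in>{1..K}. (\<lambda>x. pihat x y) \<in> borel_measurable MX"
  shows "(\<lambda>s. rscore K pihat (fst (fst s)) (snd (fst s)) (snd s))
    \<in> borel_measurable ((MX \<Otimes>\<^sub>M count_space {1..K}) \<Otimes>\<^sub>M borel)"
proof (rule measurable_compose_countable'[where I="{1..K}" and g="\<lambda>s. snd (fst s)"])
  fix y assume y: "y \<in> {1..K}"
  have pihat: "(\<lambda>s. pihat (fst (fst s)) y')
      \<in> borel_measurable ((MX \<Otimes>\<^sub>M count_space {1..K}) \<Otimes>\<^sub>M borel)"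
    if "y' \<in> {1..K}" for y'
    using assms that
      by (intro measurable_compose[OF measurable_compose[OF measurable_fst measurable_fst]]) auto
  show "(\<lambda>s. rscore K pihat (fst (fst s)) y (snd s))
      \<in> borel_measurable ((MX \<Otimes>\<^sub>M count_space {1..K}) \<Otimes>\<^sub>M borel)"
    unfolding rscore_def rho_def
    by (intro borel_measurable_add borel_measurable_times borel_measurable_sum measurable_If
        borel_measurable_const measurable_snd borel_measurable_less pihat y)
qed auto

text \<open>The entry ((x, y), u) of a sample is a feature, its label and the uniform variable that
  randomises its score.\<close>
type_synonym 'x sample = "nat \<Rightarrow> ('x \<times> nat) \<times> real"

definition obs_label :: "'x sample \<Rightarrow> nat \<Rightarrow> nat" where
  "obs_label v i = snd (fst (v i))"

definition obs_score :: "nat \<Rightarrow> ('x \<Rightarrow> nat \<Rightarrow> real) \<Rightarrow> 'x sample \<Rightarrow> nat \<Rightarrow> real" where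
  "obs_score K pihat v i = rscore K pihat (fst (fst (v i))) (snd (fst (v i))) (snd (v i))"

text \<open>Observation k, viewed as the test point of the sample v indexed by I: its label enters the
  weights and its score is replaced by 1, as in the definition of tau_star.\<close>
definition covered ::
  "nat \<Rightarrow> ('x \<Rightarrow> nat \<Rightarrow> real) \<Rightarrow> (nat \<Rightarrow> real) \<Rightarrow> nat set \<Rightarrow> real \<Rightarrow> 'x sample \<Rightarrow> nat \<Rightarrow> bool"
  where
  "covered K pihat w I \<alpha> v k \<longleftrightarrow> obs_label v k \<in> {1..K} \<and>
     obs_score K pihat v k \<le> quantile (1 - \<alpha>)
       (weighted_cdf I (\<lambda>j. w (obs_label v j) / (\<Sum>i\<in>I. w (obs_label v i)))
         ((obs_score K pihat v)(k := 1)))"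

lemma covered_cong:
  assumes "\<And>i. i \<in> I \<Longrightarrow> v i = v' i" and "k \<in> I"
  shows "covered K pihat w I \<alpha> v k \<longleftrightarrow> covered K pihat w I \<alpha> v' k"
proof -
  have eq: "obs_label v i = obs_label v' i" "obs_score K pihat v i = obs_score K pihat v' i"
    if "i \<in> I" for i
    using assms that by (simp_all add: obs_label_def obs_score_def)
  then have "weighted_cdf I (\<lambda>j. w (obs_label v j) / (\<Sum>i\<in>I. w (obs_label v i)))
      ((obs_score K pihat v)(k := 1))
    = weighted_cdf I (\<lambda>j. w (obs_label v' j) / (\<Sum>i\<in>I. w (obs_label v' i)))
      ((obs_score K pihat v')(k := 1))"
    by (intro weighted_cdf_cong) simp_all
  then show ?thesis
    unfolding covered_def using eq assms(2) by simp
qed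

lemma covered_permute:
  assumes \<sigma>: "bij_betw \<sigma> I I" and "k \<in> I"
  shows "covered K pihat w I \<alpha> (\<lambda>i. v (\<sigma> i)) k \<longleftrightarrow> covered K pihat w I \<alpha> v (\<sigma> k)"
proof -
  let ?a = "\<lambda>j. w (obs_label v j) / (\<Sum>i\<in>I. w (obs_label v i))"
    and ?r = "(obs_score K pihat v)(\<sigma> k := 1)"
  have "(\<Sum>i\<in>I. w (obs_label v (\<sigma> i))) = (\<Sum>i\<in>I. w (obs_label v i))"
    using sum.reindex_bij_betw[OF \<sigma>] .
  moreover have "((obs_score K pihat (\<lambda>i. v (\<sigma> i)))(k := 1)) i = ?r (\<sigma> i)" if "i \<in> I" for i
    using that \<open>k \<in> I\<close> bij_betw_imp_inj_on[OF \<sigma>] by (auto simp: obs_score_def dest: inj_onD)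
  ultimately have "weighted_cdf I
      (\<lambda>j. w (obs_label (\<lambda>i. v (\<sigma> i)) j) / (\<Sum>i\<in>I. w (obs_label (\<lambda>i. v (\<sigma> i)) i)))
      ((obs_score K pihat (\<lambda>i. v (\<sigma> i)))(k := 1))
    = weighted_cdf I (\<lambda>j. ?a (\<sigma> j)) (\<lambda>j. ?r (\<sigma> j))"
    by (intro weighted_cdf_cong) (simp_all add: obs_label_def)
  also have "\<dots> = weighted_cdf I ?a ?r"
    by (rule weighted_cdf_reindex[OF \<sigma>])
  finally show ?thesis
    unfolding covered_def by (simp add: obs_label_def obs_score_def)
qed

lemma covered_transpose:
  assumes "k \<in> I" and "m \<in> I"
  shows "covered K pihat w I \<alpha> (\<lambda>i\<in>I. v (Transposition.transpose k m i)) m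
    \<longleftrightarrow> covered K pihat w I \<alpha> v k"
proof -
  let ?\<tau> = "Transposition.transpose k m"
  have \<tau>: "bij_betw ?\<tau> I I"
    using assms by (simp add: bij_betw_transpose_iff)
  have "covered K pihat w I \<alpha> (\<lambda>i\<in>I. v (?\<tau> i)) m \<longleftrightarrow> covered K pihat w I \<alpha> (\<lambda>i. v (?\<tau> i)) m"
    using assms(2) by (intro covered_cong) auto
  also have "\<dots> \<longleftrightarrow> covered K pihat w I \<alpha> v (?\<tau> m)"
    by (rule covered_permute[OF \<tau> assms(2)])
  finally show ?thesis by simp
qed

lemma covered_weight_bound:
  assumes I: "finite I" and labels: "\<forall>i\<in>I. obs_label v i \<in> {1..K}" and w: "\<forall>y\<in>{1..K}. 0 \<le> w y"
    and scores: "\<forall>i\<in>I. obs_score K pihat v i \<le> 1" and \<alpha>: "0 < \<alpha>" "\<alpha> < 1"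
  shows "(1 - \<alpha>) * (\<Sum>k\<in>I. w (obs_label v k))
    \<le> (\<Sum>k\<in>I. w (obs_label v k) * (if covered K pihat w I \<alpha> v k then 1 else 0))"
  using weighted_coverage_replace_by_one[OF I _ scores, of "\<lambda>k. w (obs_label v k)" "1 - \<alpha>"]
    labels w \<alpha> unfolding covered_def by simp

lemma pred_set_tau_star_iff_covered:
  fixes Z :: "nat \<Rightarrow> 'x \<times> nat" and U :: "nat \<Rightarrow> real"
  shows "snd (Z (n + 1)) \<in> pred_set K pihat
      (tau_star w n (\<lambda>i. snd (Z i)) (\<lambda>i. rscore K pihat (fst (Z i)) (snd (Z i)) (U i)) \<alpha>)
      (fst (Z (n + 1))) (U (n + 1))
    \<longleftrightarrow> covered K pihat w {1..n+1} \<alpha> (\<lambda>i\<in>{1..n+1}. (Z i, U i)) (n + 1)"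
proof -
  let ?v = "\<lambda>i. (Z i, U i)" and ?Ys = "\<lambda>i. snd (Z i)"
  have "(\<Sum>i\<in>{1..n+1}. w (?Ys i)) = (\<Sum>j=1..n. w (?Ys j)) + w (?Ys (n + 1))"
    by simp
  then have "\<And>rs. wcdf w n ?Ys rs (?Ys (n + 1)) = weighted_cdf {1..n+1}
      (\<lambda>j. w (?Ys j) / (\<Sum>i\<in>{1..n+1}. w (?Ys i))) (rs(n + 1 := 1))"
    unfolding wcdf_def weighted_cdf_def Let_def fun_eq_iff by simp
  moreover have "obs_label ?v = ?Ys"
    and "obs_score K pihat ?v = (\<lambda>i. rscore K pihat (fst (Z i)) (snd (Z i)) (U i))"
    by (simp_all add: fun_eq_iff obs_label_def obs_score_def)
  ultimately have "snd (Z (n + 1)) \<in> pred_set K pihat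
      (tau_star w n ?Ys (\<lambda>i. rscore K pihat (fst (Z i)) (snd (Z i)) (U i)) \<alpha>)
      (fst (Z (n + 1))) (U (n + 1)) \<longleftrightarrow> covered K pihat w {1..n+1} \<alpha> ?v (n + 1)"
    unfolding pred_set_def tau_star_def covered_def by simp
  also have "\<dots> \<longleftrightarrow> covered K pihat w {1..n+1} \<alpha> (\<lambda>i\<in>{1..n+1}. ?v i) (n + 1)"
    by (rule covered_cong) auto
  finally show ?thesis .
qed

lemma borel_measurable_obs_weight:
  "(\<lambda>v. w (obs_label v i)) \<in> borel_measurable (PiM I (\<lambda>_. (MX \<Otimes>\<^sub>M count_space {1..K}) \<Otimes>\<^sub>M N))"
proof -
  have "(\<lambda>s. w (snd (fst s))) \<in> borel_measurable ((MX \<Otimes>\<^sub>M count_space {1..K}) \<Otimes>\<^sub>M N)"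
    by (rule measurable_compose[OF measurable_fst borel_measurable_label_fun]) simp
  then show ?thesis
    unfolding obs_label_def by (rule borel_measurable_PiM_component_any)
qed

lemma covered_iff_scores:
  fixes I :: "nat set" and v :: "'x sample" and w :: "nat \<Rightarrow> real"
    and K k :: nat and pihat :: "'x \<Rightarrow> nat \<Rightarrow> real"
  defines "W \<equiv> \<Sum>i\<in>I. w (obs_label v i)" and "r \<equiv> (obs_score K pihat v)(k := 1)"
  assumes I: "finite I" "k \<in> I" and labels: "\<forall>i\<in>I. obs_label v i \<in> {1..K}"
    and w: "\<forall>y\<in>{1..K}. 0 \<le> w y" and \<alpha>: "0 < \<alpha>" "\<alpha> < 1"
  shows "covered K pihat w I \<alpha> v k \<longleftrightarrow> (if W = 0 then obs_score K pihat v k \<le> Inf {}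
    else (\<forall>j\<in>I. 1 - \<alpha> \<le> weighted_cdf I (\<lambda>j. w (obs_label v j) / W) r (r j)
      \<longrightarrow> obs_score K pihat v k \<le> r j))"
proof -
  let ?F = "weighted_cdf I (\<lambda>j. w (obs_label v j) / W) r"
  have w_v: "\<forall>i\<in>I. 0 \<le> w (obs_label v i)" using labels w by auto
  have cov: "covered K pihat w I \<alpha> v k \<longleftrightarrow> obs_score K pihat v k \<le> quantile (1 - \<alpha>) ?F"
    using labels I(2) unfolding covered_def W_def r_def by blast
  show ?thesis
  proof (cases "W = 0")
    case True
    \<comment> \<open>all weights vanish, so the CDF is identically 0 and the quantile is the junk value Inf {}\<close>
    then have "{z. 1 - \<alpha> \<le> ?F z} = {}" using \<alpha> unfolding weighted_cdf_def by simp
    then have "quantile (1 - \<alpha>) ?F = Inf {}" unfolding quantile_def by simp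
    then show ?thesis using cov True by simp
  next
    case False
    then have "W > 0"
      using w_v sum_nonneg[of I "\<lambda>i. w (obs_label v i)"] unfolding W_def by fastforce
    then have "(\<Sum>j\<in>I. w (obs_label v j) / W) = 1"
      unfolding W_def by (simp add: sum_divide_distrib[symmetric])
    then have "obs_score K pihat v k \<le> quantile (1 - \<alpha>) ?F
        \<longleftrightarrow> (\<forall>j\<in>I. 1 - \<alpha> \<le> ?F (r j) \<longrightarrow> obs_score K pihat v k \<le> r j)"
      using I \<alpha> w_v \<open>W > 0\<close> by (intro le_quantile_weighted_cdf_iff) auto
    then show ?thesis using cov False by simp
  qed
qed

lemma sets_covered:
  fixes MX :: "'x measure" and K :: nat
  defines "S \<equiv> (MX \<Otimes>\<^sub>M count_space {1..K}) \<Otimes>\<^sub>M (borel :: real measure)"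
  assumes I: "finite I" "k \<in> I" and pihat: "\<forall>y\<in>{1..K}. (\<lambda>x. pihat x y) \<in> borel_measurable MX"
    and w: "\<forall>y\<in>{1..K}. 0 \<le> w y" and \<alpha>: "0 < \<alpha>" "\<alpha> < 1"
  shows "{v \<in> space (PiM I (\<lambda>_. S)). covered K pihat w I \<alpha> v k} \<in> sets (PiM I (\<lambda>_. S))"
proof -
  let ?W = "\<lambda>v. \<Sum>i\<in>I. w (obs_label v i)"
  let ?r = "\<lambda>v. (obs_score K pihat v)(k := 1)"
  let ?F = "\<lambda>v. weighted_cdf I (\<lambda>j. w (obs_label v j) / ?W v) (?r v)"
  have [measurable]: "(\<lambda>v. w (obs_label v i)) \<in> borel_measurable (PiM I (\<lambda>_. S))" for i
    unfolding S_def by (rule borel_measurable_obs_weight)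
  have score [measurable]: "(\<lambda>v. obs_score K pihat v i) \<in> borel_measurable (PiM I (\<lambda>_. S))" for i
    unfolding obs_score_def S_def
    by (rule borel_measurable_PiM_component_any[OF borel_measurable_rscore[OF pihat]])
  have r: "(\<lambda>v. ?r v j) \<in> borel_measurable (PiM I (\<lambda>_. S))" for j
    using score by (cases "j = k") simp_all
  have [measurable]: "Measurable.pred (PiM I (\<lambda>_. S)) (\<lambda>v. ?r v i \<le> ?r v j)"
    "Measurable.pred (PiM I (\<lambda>_. S)) (\<lambda>v. obs_score K pihat v k \<le> ?r v j)" for i j
    unfolding pred_def by (intro borel_measurable_le r score)+
  have [measurable]: "Measurable.pred (PiM I (\<lambda>_. S)) (\<lambda>v. ?W v = 0)"
    unfolding pred_def
      by (intro borel_measurable_eq borel_measurable_sum borel_measurable_const) simp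
  have "covered K pihat w I \<alpha> v k \<longleftrightarrow> (if ?W v = 0 then obs_score K pihat v k \<le> Inf {}
      else (\<forall>j\<in>I. 1 - \<alpha> \<le> ?F v (?r v j) \<longrightarrow> obs_score K pihat v k \<le> ?r v j))"
    if v: "v \<in> space (PiM I (\<lambda>_. S))" for v
  proof (rule covered_iff_scores[OF I _ w \<alpha>])
    show "\<forall>i\<in>I. obs_label v i \<in> {1..K}"
    proof
      fix i assume "i \<in> I"
      from fst_component_in_space_PiM[OF v[unfolded S_def] this]
      show "obs_label v i \<in> {1..K}" by (auto simp: obs_label_def)
    qed
  qed
  then have "{v \<in> space (PiM I (\<lambda>_. S)). covered K pihat w I \<alpha> v k}
    = {v \<in> space (PiM I (\<lambda>_. S)). if ?W v = 0 then obs_score K pihat v k \<le> Inf {}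
      else (\<forall>j\<in>I. 1 - \<alpha> \<le> ?F v (?r v j) \<longrightarrow> obs_score K pihat v k \<le> ?r v j)}"
    by (intro Collect_cong conj_cong refl) blast
  also have "\<dots> \<in> sets (PiM I (\<lambda>_. S))"
    unfolding weighted_cdf_def using I by measurable
  finally show ?thesis .
qed

lemma AE_PiM_uniform_component:
  assumes P: "prob_space P" and I: "finite I"
  shows "AE v in PiM I (\<lambda>_. P \<Otimes>\<^sub>M uniform_measure lborel {0..1::real}). \<forall>i\<in>I. snd (v i) \<in> {0..1}"
proof (rule AE_finite_allI[OF I])
  fix i assume "i \<in> I"
  define U0 where "U0 = uniform_measure lborel {0..1::real}"
  have U0: "prob_space U0" unfolding U0_def by (rule prob_space_uniform_measure) auto
  interpret pair_sigma_finite P U0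
    using P U0 by (simp add: pair_sigma_finite_def prob_space_imp_sigma_finite)
  have "{s \<in> space (P \<Otimes>\<^sub>M U0). snd s \<in> {0..1}} \<in> sets (P \<Otimes>\<^sub>M U0)"
    unfolding U0_def by measurable
  moreover have "AE x in P. AE u in U0. snd (x, u) \<in> {0..1}"
    unfolding U0_def by (simp add: AE_uniform_measureI)
  ultimately have "AE s in P \<Otimes>\<^sub>M U0. snd s \<in> {0..1}"
    by (rule AE_pair_measure)
  then show "AE v in PiM I (\<lambda>_. P \<Otimes>\<^sub>M U0). snd (v i) \<in> {0..1}"
    using P U0 \<open>i \<in> I\<close> by (intro AE_PiM_component prob_space_pair)
qed

lemma AE_covered_swap_bound:
  fixes P :: "('x \<times> nat) measure" and MX :: "'x measure" and K :: nat
  defines "S \<equiv> (MX \<Otimes>\<^sub>M count_space {1..K}) \<Otimes>\<^sub>M (borel :: real measure)"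
    and "PU \<equiv> P \<Otimes>\<^sub>M uniform_measure lborel {0..1::real}"
  assumes P: "prob_space P" and sP: "sets P = sets (MX \<Otimes>\<^sub>M count_space {1..K})"
    and simplex: "\<forall>x\<in>space MX. in_simplex K (pihat x)"
    and w: "\<forall>y\<in>{1..K}. 0 \<le> w y" and I: "finite I" "m \<in> I" and \<alpha>: "0 < \<alpha>" "\<alpha> < 1"
  shows "AE v in PiM I (\<lambda>_. PU). ennreal (1 - \<alpha>) * (\<Sum>k\<in>I. ennreal (w (obs_label v k)))
    \<le> (\<Sum>k\<in>I. ennreal (w (obs_label v k)) *
        indicator {v \<in> space (PiM I (\<lambda>_. S)). covered K pihat w I \<alpha> v m}
          (\<lambda>i\<in>I. v (Transposition.transpose k m i)))"
proof -
  let ?G = "{v \<in> space (PiM I (\<lambda>_. S)). covered K pihat w I \<alpha> v m}"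
  have "sets PU = sets S"
    unfolding PU_def S_def by (rule sets_pair_measure_cong[OF sP]) simp
  then have space: "space (PiM I (\<lambda>_. PU)) = space (PiM I (\<lambda>_. S))"
    by (intro sets_eq_imp_space_eq sets_PiM_cong) simp_all
  show ?thesis
    using AE_PiM_uniform_component[OF P I(1)] AE_space unfolding PU_def[symmetric]
  proof eventually_elim
    case (elim v)
    then have v: "v \<in> space (PiM I (\<lambda>_. S))" and u: "\<forall>i\<in>I. snd (v i) \<in> {0..1}"
      using space by auto
    have x: "fst (fst (v i)) \<in> space MX" and y: "obs_label v i \<in> {1..K}" if "i \<in> I" for i
      using fst_component_in_space_PiM[OF v[unfolded S_def] that] by (auto simp: obs_label_def)
    have scores: "\<forall>i\<in>I. obs_score K pihat v i \<le> 1"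
      unfolding obs_score_def using x y[unfolded obs_label_def] u simplex
        by (auto intro!: rscore_le_1)
    have swap: "indicator ?G (\<lambda>i\<in>I. v (Transposition.transpose k m i))
        = (if covered K pihat w I \<alpha> v k then 1 else 0 :: ennreal)" if "k \<in> I" for k
      using measurable_space[OF measurable_PiM_transpose[OF that I(2)] v]
        covered_transpose[OF that I(2), of K pihat w \<alpha> v]
      by simp
    have "ennreal (1 - \<alpha>) * (\<Sum>k\<in>I. ennreal (w (obs_label v k)))
        = ennreal ((1 - \<alpha>) * (\<Sum>k\<in>I. w (obs_label v k)))"
      using y w \<alpha> by (simp add: sum_ennreal sum_nonneg ennreal_mult)
    also have "\<dots> \<le> ennreal (\<Sum>k\<in>I. w (obs_label v k) * (if covered K pihat w I \<alpha> v k then 1 else 0))"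
      using covered_weight_bound[OF I(1) _ w scores \<alpha>] y by (intro ennreal_leI) blast
    also have "\<dots>
        = (\<Sum>k\<in>I. ennreal (w (obs_label v k) * (if covered K pihat w I \<alpha> v k then 1 else 0)))"
      using y w by (intro sum_ennreal[symmetric]) auto
    also have "\<dots> = (\<Sum>k\<in>I. ennreal (w (obs_label v k)) *
        indicator ?G (\<lambda>i\<in>I. v (Transposition.transpose k m i)))"
      using swap by (intro sum.cong) auto
    finally show ?case .
  qed
qed

lemma emeasure_covered_ge:
  fixes P Q :: "('x \<times> nat) measure" and MX :: "'x measure" and K :: nat
  defines "S \<equiv> (MX \<Otimes>\<^sub>M count_space {1..K}) \<Otimes>\<^sub>M (borel :: real measure)"
    and "U0 \<equiv> uniform_measure lborel {0..1::real}"
  assumes P: "prob_space P" and Q: "prob_space Q"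
    and sP: "sets P = sets (MX \<Otimes>\<^sub>M count_space {1..K})"
    and sQ: "sets Q = sets (MX \<Otimes>\<^sub>M count_space {1..K})"
    and p_pos: "\<forall>y\<in>{1..K}. measure P (space MX \<times> {y}) > 0"
    and w_def: "\<forall>y\<in>{1..K}. w y = measure Q (space MX \<times> {y}) / measure P (space MX \<times> {y})"
    and label_shift: "\<forall>A\<in>sets MX. \<forall>y\<in>{1..K}.
          measure Q (A \<times> {y}) * measure P (space MX \<times> {y})
        = measure P (A \<times> {y}) * measure Q (space MX \<times> {y})"
    and simplex: "\<forall>x\<in>space MX. in_simplex K (pihat x)"
    and pihat_meas: "\<forall>y\<in>{1..K}. (\<lambda>x. pihat x y) \<in> borel_measurable MX"
    and I: "finite I" "m \<in> I" and \<alpha>: "0 < \<alpha>" "\<alpha> < 1"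
  shows "ennreal (1 - \<alpha>) \<le> emeasure (PiM I (\<lambda>i. if i = m then Q \<Otimes>\<^sub>M U0 else P \<Otimes>\<^sub>M U0))
    {v \<in> space (PiM I (\<lambda>_. S)). covered K pihat w I \<alpha> v m}"
proof -
  define f where "f = (\<lambda>s :: ('x \<times> nat) \<times> real. ennreal (w (snd (fst s))))"
  have w: "\<forall>y\<in>{1..K}. 0 \<le> w y" using w_def by simp
  have U0: "prob_space U0" unfolding U0_def by (rule prob_space_uniform_measure) auto
  have PU: "prob_space (P \<Otimes>\<^sub>M U0)" using P U0 by (rule prob_space_pair)
  have QU: "Q \<Otimes>\<^sub>M U0 = density (P \<Otimes>\<^sub>M U0) f"
    unfolding f_def using P Q sP sQ p_pos w_def label_shift U0
    by (intro label_shift_pair_density) (simp_all add: prob_space_imp_sigma_finite)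
  have "prob_space (density (P \<Otimes>\<^sub>M U0) f)"
    unfolding QU[symmetric] using Q U0 by (rule prob_space_pair)
  moreover have "f \<in> borel_measurable (P \<Otimes>\<^sub>M U0)"
    unfolding f_def
      by (rule measurable_compose[OF measurable_fst borel_measurable_label_fun[OF sP]])
  moreover have "sets (P \<Otimes>\<^sub>M U0) = sets S"
    unfolding S_def U0_def by (rule sets_pair_measure_cong[OF sP]) simp
  then have "{v \<in> space (PiM I (\<lambda>_. S)). covered K pihat w I \<alpha> v m} \<in> sets (PiM I (\<lambda>_. P \<Otimes>\<^sub>M U0))"
    using sets_covered[OF I pihat_meas w \<alpha>] unfolding S_def by (simp cong: sets_PiM_cong)
  moreover have "AE v in PiM I (\<lambda>_. P \<Otimes>\<^sub>M U0). ennreal (1 - \<alpha>) * (\<Sum>k\<in>I. f (v k))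
      \<le> (\<Sum>k\<in>I. f (v k) * indicator {v \<in> space (PiM I (\<lambda>_. S)). covered K pihat w I \<alpha> v m}
          (\<lambda>i\<in>I. v (Transposition.transpose k m i)))"
    using AE_covered_swap_bound[OF P sP simplex w I \<alpha>] unfolding f_def S_def U0_def obs_label_def .
  ultimately show ?thesis
    unfolding QU by (intro emeasure_PiM_tilted_ge[OF PU _ _ I])
qed

theorem theorem2:
  fixes M :: "'a measure" and MX :: "'x measure"
    and P Q :: "('x \<times> nat) measure"
    and K n :: nat and w :: "nat \<Rightarrow> real"
    and pihat :: "'x \<Rightarrow> nat \<Rightarrow> real"
    and Z :: "nat \<Rightarrow> 'a \<Rightarrow> 'x \<times> nat" and U :: "nat \<Rightarrow> 'a \<Rightarrow> real"
    and \<alpha> :: real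
  assumes "prob_space P" and "prob_space Q"
    and "sets P = sets (MX \<Otimes>\<^sub>M count_space {1..K})"
    and "sets Q = sets (MX \<Otimes>\<^sub>M count_space {1..K})"
    and p_pos: "\<forall>y\<in>{1..K}. measure P (space MX \<times> {y}) > 0"
    and w_def: "\<forall>y\<in>{1..K}. w y = measure Q (space MX \<times> {y}) / measure P (space MX \<times> {y})"
    and label_shift: "\<forall>A\<in>sets MX. \<forall>y\<in>{1..K}.
          measure Q (A \<times> {y}) * measure P (space MX \<times> {y})
        = measure P (A \<times> {y}) * measure Q (space MX \<times> {y})"
    and pihat_simplex: "\<forall>x\<in>space MX. in_simplex K (pihat x)"
    and pihat_meas: "\<forall>y\<in>{1..K}. (\<lambda>x. pihat x y) \<in> borel_measurable MX"
    and "prob_space M"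
    and indep: "prob_space.indep_vars M (\<lambda>i. (MX \<Otimes>\<^sub>M count_space {1..K}) \<Otimes>\<^sub>M borel)
                  (\<lambda>i \<omega>. (Z i \<omega>, U i \<omega>)) {1..n+1}"
    and distr_cal: "\<forall>i\<in>{1..n}. distr M ((MX \<Otimes>\<^sub>M count_space {1..K}) \<Otimes>\<^sub>M borel)
                  (\<lambda>\<omega>. (Z i \<omega>, U i \<omega>)) = P \<Otimes>\<^sub>M uniform_measure lborel {0..1}"
    and distr_test: "distr M ((MX \<Otimes>\<^sub>M count_space {1..K}) \<Otimes>\<^sub>M borel)
                  (\<lambda>\<omega>. (Z (n+1) \<omega>, U (n+1) \<omega>)) = Q \<Otimes>\<^sub>M uniform_measure lborel {0..1}"
    and "0 < \<alpha>" and "\<alpha> < 1"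
  shows "measure M {\<omega> \<in> space M.
           snd (Z (n+1) \<omega>) \<in> pred_set K pihat
              (tau_star w n (\<lambda>i. snd (Z i \<omega>))
                 (\<lambda>i. rscore K pihat (fst (Z i \<omega>)) (snd (Z i \<omega>)) (U i \<omega>)) \<alpha>)
              (fst (Z (n+1) \<omega>)) (U (n+1) \<omega>)} \<ge> 1 - \<alpha>"
proof -
  interpret M: prob_space M by fact
  define S where "S = (MX \<Otimes>\<^sub>M count_space {1..K}) \<Otimes>\<^sub>M (borel :: real measure)"
  define I where "I = {1..n+1}"
  define G where "G = {v \<in> space (PiM I (\<lambda>_. S)). covered K pihat w I \<alpha> v (n + 1)}"
  let ?X = "\<lambda>\<omega>. \<lambda>i\<in>I. (Z i \<omega>, U i \<omega>)"
  have X: "?X \<in> measurable M (PiM I (\<lambda>_. S))"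
    using indep unfolding M.indep_vars_def2 S_def I_def by (intro measurable_restrict) auto
  have G: "G \<in> sets (PiM I (\<lambda>_. S))"
    unfolding G_def S_def I_def using w_def assms(14,15) pihat_meas by (intro sets_covered) auto
  have "distr M (PiM I (\<lambda>_. S)) ?X = PiM I (\<lambda>i. if i = n + 1
      then Q \<Otimes>\<^sub>M uniform_measure lborel {0..1} else P \<Otimes>\<^sub>M uniform_measure lborel {0..1})"
    using distr_cal distr_test unfolding S_def I_def
      by (intro M.distr_indep_vars_PiM[OF _ indep]) auto
  moreover have "ennreal (1 - \<alpha>) \<le> emeasure (PiM I (\<lambda>i. if i = n + 1
      then Q \<Otimes>\<^sub>M uniform_measure lborel {0..1} else P \<Otimes>\<^sub>M uniform_measure lborel {0..1})) G"
    unfolding G_def S_def I_def using assms(1-9,14,15) by (intro emeasure_covered_ge) auto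
  moreover have "{\<omega> \<in> space M. snd (Z (n+1) \<omega>) \<in> pred_set K pihat
        (tau_star w n (\<lambda>i. snd (Z i \<omega>)) (\<lambda>i. rscore K pihat (fst (Z i \<omega>)) (snd (Z i \<omega>)) (U i \<omega>)) \<alpha>)
        (fst (Z (n+1) \<omega>)) (U (n+1) \<omega>)} = ?X -` G \<inter> space M"
    using pred_set_tau_star_iff_covered[where Z="\<lambda>i. Z i \<omega>" and U="\<lambda>i. U i \<omega>" for \<omega>]
      measurable_space[OF X]
    unfolding G_def I_def by auto
  ultimately show ?thesis
    using emeasure_distr[OF X G] M.emeasure_eq_measure assms(15) by (simp add: ennreal_le_iff)
qed

end
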